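(* Fix an integer $q\ge 2$. There is a constant $C>0$ depending only on $q$ such that for every $\varepsilon>0$ there exists $n_0$ with the following property. Let $n\ge n_0$, let $t$ be an integer with $60\le t\le 10\sqrt{n}$, and let $S\subseteq[q]^n$ satisfy $\Delta(G[S])\le n^5$. Let \[ S_2 = \left\{v\in S: \sum_{k=1}^{20} \deg_k(v) \ge \frac{\log n}{\varepsilon}\right\}. \] Then $i(G[S_2])\le 2^{C\varepsilon H_q(n,t)}$.
   Context: $d$ is the Hamming distance on $[q]^n$. $V_q(n,r) = \sum_{i=0}^{r}\binom{n}{i}(q-1)^i$ and $H_q(n,t) = q^n / V_q(n,t)$. $G = G_{q,n,t}$ is the graph with vertex set $[q]^n$ in which two distinct vertices are adjacent iff their Hamming distance is at most $2t$; $G[S]$ is its induced subgraph on $S$, $\Delta(\cdot)$ is the maximum degree, and $i(\cdot)$ is the number of independent sets of a graph. For $v\in S$ and $k\ge1$, $\deg_k(v)=|\{u\in S : d(u,v)=k\}|$. $\log$ is the natural logarithm. *)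

theory Defs
  imports Complex_Main
begin

definition cube :: "nat \<Rightarrow> nat \<Rightarrow> nat list set" where
  "cube q n = {xs. length xs = n \<and> set xs \<subseteq> {0..<q}}"

text \<open>Hamming distance (for words of equal length).\<close>
definition hamming :: "nat list \<Rightarrow> nat list \<Rightarrow> nat" where
  "hamming u v = card {i. i < length u \<and> u ! i \<noteq> v ! i}"

definition vol :: "nat \<Rightarrow> nat \<Rightarrow> nat \<Rightarrow> nat" where
  "vol q n r = (\<Sum>i=0..r. (n choose i) * (q - 1) ^ i)"

definition hbound :: "nat \<Rightarrow> nat \<Rightarrow> nat \<Rightarrow> real" where
  "hbound q n t = real (q ^ n) / real (vol q n t)"

definition adjG :: "nat \<Rightarrow> nat list \<Rightarrow> nat list \<Rightarrow> bool" where
  "adjG t u v \<longleftrightarrow> u \<noteq> v \<and> hamming u v \<le> 2 * t"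

definition max_deg :: "nat \<Rightarrow> nat list set \<Rightarrow> nat" where
  "max_deg t S = (if S = {} then 0 else Max ((\<lambda>v. card {u \<in> S. adjG t u v}) ` S))"

definition degk :: "nat list set \<Rightarrow> nat \<Rightarrow> nat list \<Rightarrow> nat" where
  "degk S k v = card {u \<in> S. hamming u v = k}"

definition indep_sets :: "nat \<Rightarrow> nat list set \<Rightarrow> nat list set set" where
  "indep_sets t S = {I. I \<subseteq> S \<and> (\<forall>u\<in>I. \<forall>v\<in>I. \<not> adjG t u v)}"

definition num_indep :: "nat \<Rightarrow> nat list set \<Rightarrow> nat" where
  "num_indep t S = card (indep_sets t S)"

end

theory Submission
  imports Defs "HOL-Real_Asymp.Real_Asymp"
begin

text \<open>Put \<open>m = \<lceil>ln n / \<epsilon>\<rceil>\<close> and \<open>H = H_q(n, t)\<close>. Every vertex \<open>v\<close> of an independent set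
  \<open>I\<close> of \<open>G[S_2]\<close> has at least \<open>m\<close> points of \<open>S\<close> within distance 20, and distinct vertices
  of \<open>I\<close> are more than \<open>2t\<close> apart, so these clusters are disjoint. The radius-\<open>t\<close> balls
  around the \<open>|I| m\<close> cluster points overlap little: two centres at distance \<open>d\<close> share at most
  \<open>q^d V(n, (2t - d) / 2)\<close> points. For two points of one cluster (\<open>1 \<le> d \<le> 40\<close>) this is
  small compared with \<open>V(n, t) / m\<close>; points of different clusters are at distance
  \<open>d \<ge> 2t - 40\<close> and overlap only when adjacent in \<open>G\<close>, i.e. for at most \<open>n^5\<close> partners,
  each sharing far less than \<open>V(n, t) / n^5\<close> points. So the balls cover at least
  \<open>|I| m V(n, t) / 2\<close> points of \<open>[q]^n\<close>, whence \<open>|I| \<le> 2H / m\<close>. Weighting each subset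
  \<open>I\<close> of \<open>S_2\<close> by \<open>n^(-6|I|)\<close> and using \<open>|S| \<le> 2 n^5 H\<close> finally gives
  \<open>i(G[S_2]) \<le> n^(12H/m) (1 + n^-6)^|S| \<le> exp (13 \<epsilon> H) \<le> 2^(26 \<epsilon> H)\<close>.\<close>

section \<open>Hamming distance and the cube\<close>

lemma hamming_Nil [simp]: "hamming [] w = 0"
  by (simp add: hamming_def)

lemma hamming_Cons: "hamming (a # u) (b # w) = (if a = b then 0 else 1) + hamming u w"
proof -
  have "{i. i < length (a # u) \<and> (a # u) ! i \<noteq> (b # w) ! i} =
      (if a = b then {} else {0}) \<union> Suc ` {i. i < length u \<and> u ! i \<noteq> w ! i}"
    by (auto simp: less_Suc_eq_0_disj)
  then show ?thesis
    by (auto simp: hamming_def card_image)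
qed

lemma hamming_self [simp]: "hamming u u = 0"
  by (simp add: hamming_def)

lemma hamming_sym: "length u = length w \<Longrightarrow> hamming u w = hamming w u"
  by (induction u w rule: list_induct2) (auto simp: hamming_Cons)

lemma hamming_triangle:
  "length u = length v \<Longrightarrow> length v = length w \<Longrightarrow> hamming u w \<le> hamming u v + hamming v w"
  by (induction u v w rule: list_induct3) (auto simp: hamming_Cons)

lemma hamming_eq_0_iff: "length u = length w \<Longrightarrow> hamming u w = 0 \<longleftrightarrow> u = w"
  by (induction u w rule: list_induct2) (auto simp: hamming_Cons)

lemma cube_length: "x \<in> cube q n \<Longrightarrow> length x = n"
  by (simp add: cube_def)

lemma hamming_sym_cube: "u \<in> cube q n \<Longrightarrow> w \<in> cube q n \<Longrightarrow> hamming u w = hamming w u"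
  by (simp add: cube_length hamming_sym)

lemma hamming_triangle_cube:
  "u \<in> cube q n \<Longrightarrow> v \<in> cube q n \<Longrightarrow> w \<in> cube q n \<Longrightarrow> hamming u w \<le> hamming u v + hamming v w"
  by (simp add: cube_length hamming_triangle)

lemma hamming_centres_le:
  assumes "u \<in> cube q n" "u' \<in> cube q n" "v \<in> cube q n" "w \<in> cube q n"
    and "hamming u v \<le> r" "hamming u' w \<le> r"
  shows "hamming v w \<le> hamming u u' + 2 * r"
  using hamming_triangle_cube[OF assms(3,1,4)] hamming_triangle_cube[OF assms(1,2,4)]
    hamming_sym_cube[OF assms(1,3)] assms(5,6)
  by linarith

lemma cube_eq_lists: "cube q n = {xs. set xs \<subseteq> {0..<q} \<and> length xs = n}"
  by (auto simp: cube_def)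

lemma finite_cube [simp]: "finite (cube q n)"
  using finite_lists_length_eq[of "{0..<q}" n] by (simp add: cube_eq_lists)

lemma card_cube: "card (cube q n) = q ^ n"
  using card_lists_length_eq[of "{0..<q}" n] by (simp add: cube_eq_lists)

lemma cube_0: "cube q 0 = {[]}"
  by (auto simp: cube_def)

lemma card_cube_Suc_filter:
  "card {x \<in> cube q (Suc n). P x} = (\<Sum>c<q. card {x \<in> cube q n. P (c # x)})"
proof -
  have "{x \<in> cube q (Suc n). P x} = (\<Union>c<q. (#) c ` {x \<in> cube q n. P (c # x)})"
    by (auto simp: cube_def length_Suc_conv)
  also have "card \<dots> = (\<Sum>c<q. card ((#) c ` {x \<in> cube q n. P (c # x)}))"
    by (rule card_UN_disjoint) auto
  finally show ?thesis
    by (simp add: card_image)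
qed

section \<open>Volumes of Hamming balls\<close>

lemma vol_0 [simp]: "vol q 0 r = 1"
proof -
  have "vol q 0 r = (\<Sum>i\<in>{0..r}. if i = 0 then 1 else 0)"
    unfolding vol_def by (rule sum.cong) auto
  then show ?thesis by simp
qed

lemma vol_radius_0 [simp]: "vol q n 0 = 1"
  by (simp add: vol_def)

lemma vol_Suc_Suc: "vol q (Suc n) (Suc r) = vol q n (Suc r) + (q - 1) * vol q n r"
proof -
  have "(\<Sum>i=0..r. (Suc n choose Suc i) * (q-1) ^ Suc i) =
      (\<Sum>i=0..r. (n choose Suc i) * (q-1) ^ Suc i + (q-1) * ((n choose i) * (q-1) ^ i))"
    by (rule sum.cong) (simp_all add: add_mult_distrib)
  then show ?thesis
    unfolding vol_def sum.atLeast0_atMost_Suc_shift by (simp add: sum.distrib sum_distrib_left)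
qed

lemma vol_Suc: "1 \<le> r \<Longrightarrow> vol q (Suc n) r = vol q n r + (q - 1) * vol q n (r - 1)"
  by (cases r) (simp_all add: vol_Suc_Suc)

lemma vol_mono_length: "vol q n r \<le> vol q (Suc n) r"
  by (cases r) (simp_all add: vol_Suc_Suc)

lemma vol_mono_radius: "r \<le> r' \<Longrightarrow> vol q n r \<le> vol q n r'"
  unfolding vol_def by (rule sum_mono2) auto

lemma vol_ge_1: "1 \<le> vol q n t"
  using vol_mono_radius[of 0 t q n] by simp

lemma binomial_le_vol: "q \<ge> 2 \<Longrightarrow> n choose t \<le> vol q n t"
  unfolding vol_def
  by (rule order.trans[OF _ member_le_sum[of t _ "\<lambda>i. (n choose i) * (q-1) ^ i"]]) auto

lemma power_div_le_vol:
  assumes "2 \<le> q" "t \<le> n"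
  shows "(real n / real t) ^ t \<le> real (vol q n t)"
proof -
  have "(real n / real t) ^ t \<le> real (n choose t)"
    by (rule binomial_ge_n_over_k_pow_k) (rule assms(2))
  also have "\<dots> \<le> real (vol q n t)"
    using binomial_le_vol[OF assms(1)] by simp
  finally show ?thesis .
qed

lemma vol_le_power: "1 \<le> n * q \<Longrightarrow> vol q n r \<le> Suc r * (n * q) ^ r"
proof -
  assume nq: "1 \<le> n * q"
  have "(n choose i) * (q-1) ^ i \<le> (n * q) ^ r" if "i \<le> r" for i
  proof -
    have "n choose i \<le> n ^ i"
      by (cases "i \<le> n") (auto simp: binomial_le_pow binomial_eq_0)
    then have "(n choose i) * (q-1) ^ i \<le> n ^ i * q ^ i"
      by (intro mult_le_mono power_mono) auto
    also have "\<dots> \<le> (n * q) ^ r"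
      using nq that by (simp add: power_mult_distrib[symmetric] power_increasing)
    finally show ?thesis .
  qed
  then have "vol q n r \<le> (\<Sum>i=0..r. (n * q) ^ r)"
    unfolding vol_def by (intro sum_mono) auto
  then show ?thesis by simp
qed

lemma vol_pred_ratio:
  assumes "q \<ge> 2" "t \<ge> 1"
  shows "(n - t) * vol q n (t - 1) \<le> t * vol q n t"
proof -
  obtain r where t: "t = Suc r" using assms by (cases t) auto
  have "(n - t) * ((n choose i) * (q-1) ^ i) \<le> t * ((n choose Suc i) * (q-1) ^ Suc i)"
    if "i \<le> r" for i
  proof -
    have "(n - t) * (n choose i) \<le> (n - i) * (n choose i)"
      using that t by (intro mult_le_mono1) auto
    also have "\<dots> = Suc i * (n choose Suc i)"
      by (simp only: binomial_absorption binomial_absorb_comp)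
    also have "\<dots> \<le> t * (n choose Suc i)"
      using that t by (intro mult_le_mono1) auto
    finally have "(n - t) * (n choose i) \<le> t * (n choose Suc i)" .
    moreover have "(q-1) ^ i \<le> (q-1) ^ Suc i"
      using assms by (intro power_increasing) auto
    ultimately have "(n - t) * (n choose i) * (q-1) ^ i \<le> t * (n choose Suc i) * (q-1) ^ Suc i"
      by (rule mult_le_mono)
    then show ?thesis
      by (simp only: mult.assoc)
  qed
  then have "(n - t) * vol q n r \<le> t * (\<Sum>i=0..r. (n choose Suc i) * (q-1) ^ Suc i)"
    unfolding vol_def sum_distrib_left by (intro sum_mono) auto
  also have "\<dots> \<le> t * vol q n t"
    unfolding t vol_def sum.atLeast0_atMost_Suc_shift by simp
  finally show ?thesis using t by simp
qed

lemma vol_pred_le: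
  assumes "2 \<le> q" "1 \<le> t" "c * t + t \<le> n"
  shows "c * vol q n (t - 1) \<le> vol q n t"
proof -
  have "c * t \<le> n - t"
    using assms(3) by linarith
  then have "t * (c * vol q n (t - 1)) \<le> (n - t) * vol q n (t - 1)"
    by (metis mult.assoc mult.commute mult_le_mono1)
  also have "\<dots> \<le> t * vol q n t"
    by (rule vol_pred_ratio[OF assms(1,2)])
  finally show ?thesis
    using assms(2) by simp
qed

section \<open>Intersections of Hamming balls\<close>

definition hamming_ball :: "nat \<Rightarrow> nat \<Rightarrow> nat \<Rightarrow> nat list \<Rightarrow> nat list set" where
  "hamming_ball q n r u = {x \<in> cube q n. hamming x u \<le> r}"

lemma hamming_ball_subset_cube: "hamming_ball q n r u \<subseteq> cube q n"
  by (auto simp: hamming_ball_def)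

lemma finite_hamming_ball [simp]: "finite (hamming_ball q n r u)"
  by (simp add: hamming_ball_def)

lemma card_hamming_ball: "u \<in> cube q n \<Longrightarrow> card (hamming_ball q n r u) = vol q n r"
  unfolding hamming_ball_def
proof (induction n arbitrary: u r)
  case 0
  then have "{x \<in> cube q 0. hamming x u \<le> r} = {[]}"
    by (auto simp: cube_0)
  then show ?case by simp
next
  case (Suc n)
  then obtain a u' where u: "u = a # u'" "a < q" "u' \<in> cube q n"
    by (cases u) (auto simp: cube_def)
  have "card {x \<in> cube q (Suc n). hamming x u \<le> r} =
      (\<Sum>c<q. card {x \<in> cube q n. (if c = a then 0 else 1) + hamming x u' \<le> r})"
    unfolding card_cube_Suc_filter u hamming_Cons ..
  also have "\<dots> = card {x \<in> cube q n. hamming x u' \<le> r} +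
      (q - 1) * card {x \<in> cube q n. 1 + hamming x u' \<le> r}"
    using u(2) by (simp add: sum.remove[of "{..<q}" a])
  also have "\<dots> = vol q (Suc n) r"
  proof (cases "r = 0")
    case True
    then show ?thesis using Suc.IH[OF u(3), of 0] by simp
  next
    case False
    then have "{x \<in> cube q n. 1 + hamming x u' \<le> r} = {x \<in> cube q n. hamming x u' \<le> r - 1}"
      by auto
    then show ?thesis using Suc.IH[OF u(3)] False by (simp add: vol_Suc)
  qed
  finally show ?case .
qed

lemma card_hamming_sum_Cons:
  "card {x \<in> cube q (Suc n). hamming x (a # u) + hamming x (b # w) \<le> s} =
     (\<Sum>c<q. card {x \<in> cube q n.
        (if c = a then 0 else 1) + (if c = b then 0 else 1) + (hamming x u + hamming x w) \<le> s})"
  unfolding card_cube_Suc_filter hamming_Cons by (simp add: add_ac)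

lemma card_hamming_sum_Cons_same:
  assumes "a < q"
  shows "card {x \<in> cube q (Suc n). hamming x (a # u) + hamming x (a # w) \<le> s} =
     card {x \<in> cube q n. hamming x u + hamming x w \<le> s} +
     (q - 1) * card {x \<in> cube q n. 2 + (hamming x u + hamming x w) \<le> s}"
  unfolding card_hamming_sum_Cons using assms
  by (simp add: sum.remove[of "{..<q}" a] numeral_2_eq_2)

lemma card_hamming_sum_Cons_diff:
  assumes "a \<noteq> b"
  shows "card {x \<in> cube q (Suc n). hamming x (a # u) + hamming x (b # w) \<le> s}
           \<le> q * card {x \<in> cube q n. hamming x u + hamming x w \<le> s - 1}"
proof -
  have "card {x \<in> cube q n. (if c = a then 0 else 1) + (if c = b then 0 else 1) +
      (hamming x u + hamming x w) \<le> s} \<le> card {x \<in> cube q n. hamming x u + hamming x w \<le> s - 1}"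
    for c
    using assms by (intro card_mono) auto
  then have "card {x \<in> cube q (Suc n). hamming x (a # u) + hamming x (b # w) \<le> s}
      \<le> (\<Sum>c<q. card {x \<in> cube q n. hamming x u + hamming x w \<le> s - 1})"
    unfolding card_hamming_sum_Cons by (rule sum_mono)
  then show ?thesis
    by simp
qed

lemma card_hamming_sum_Cons_same_le:
  assumes "a < q" "u \<in> cube q n" "w \<in> cube q n"
    and IH: "\<And>s. card {x \<in> cube q n. hamming x u + hamming x w \<le> s}
               \<le> q ^ hamming u w * vol q n ((s - hamming u w) div 2)"
  shows "card {x \<in> cube q (Suc n). hamming x (a # u) + hamming x (a # w) \<le> s}
           \<le> q ^ hamming u w * vol q (Suc n) ((s - hamming u w) div 2)"
proof -
  let ?d = "hamming u w"
  let ?E = "\<lambda>s. card {x \<in> cube q n. hamming x u + hamming x w \<le> s}"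
  let ?E2 = "card {x \<in> cube q n. 2 + (hamming x u + hamming x w) \<le> s}"
  have "card {x \<in> cube q (Suc n). hamming x (a # u) + hamming x (a # w) \<le> s} = ?E s + (q - 1) * ?E2"
    by (rule card_hamming_sum_Cons_same[OF assms(1)])
  also have "\<dots> \<le> q ^ ?d * vol q (Suc n) ((s - ?d) div 2)"
  proof (cases "?d + 2 \<le> s")
    case True
    then have "?E2 = ?E (s - 2)" "(s - 2 - ?d) div 2 = (s - ?d) div 2 - 1" "1 \<le> (s - ?d) div 2"
      by (auto intro: arg_cong[where f = card])
    then have "?E s + (q - 1) * ?E2 \<le>
        q ^ ?d * vol q n ((s - ?d) div 2) + (q - 1) * (q ^ ?d * vol q n ((s - ?d) div 2 - 1))"
      using IH[of s] IH[of "s - 2"] by (intro add_mono mult_le_mono2) auto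
    also have "\<dots> = q ^ ?d * vol q (Suc n) ((s - ?d) div 2)"
      using \<open>1 \<le> (s - ?d) div 2\<close> by (simp add: vol_Suc distrib_left mult.left_commute)
    finally show ?thesis .
  next
    case False
    have "?d \<le> hamming x u + hamming x w" if "x \<in> cube q n" for x
      using hamming_triangle_cube[OF assms(2) that assms(3)] hamming_sym_cube[OF assms(2) that]
      by simp
    then have empty: "{x \<in> cube q n. 2 + (hamming x u + hamming x w) \<le> s} = {}"
      using False by fastforce
    have "?E2 = 0"
      unfolding empty by simp
    with order_trans[OF IH[of s] mult_le_mono2[OF vol_mono_length]] show ?thesis
      by (simp only: mult_0_right add_0_right)
  qed
  finally show ?thesis .
qed

text \<open>Points close to both \<open>u\<close> and \<open>w\<close> are free on the \<open>hamming u w\<close> coordinates where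
  \<open>u\<close> and \<open>w\<close> differ, and each deviation on the remaining coordinates costs \<open>2\<close>.\<close>
lemma card_hamming_sum_le:
  assumes "u \<in> cube q n" "w \<in> cube q n"
  shows "card {x \<in> cube q n. hamming x u + hamming x w \<le> s}
           \<le> q ^ hamming u w * vol q n ((s - hamming u w) div 2)"
  using assms
proof (induction n arbitrary: u w s)
  case 0
  then show ?case by (simp add: cube_0 card_le_Suc0_iff_eq)
next
  case (Suc n)
  from Suc.prems obtain a u' b w' where
    u: "u = a # u'" "a < q" "u' \<in> cube q n" and w: "w = b # w'" "w' \<in> cube q n"
    by (cases u; cases w) (auto simp: cube_def)
  note IH = Suc.IH[OF u(3) w(2)]
  show ?case
  proof (cases "a = b")
    case True
    then show ?thesis
      using card_hamming_sum_Cons_same_le[OF u(2,3) w(2) IH] by (simp add: u w hamming_Cons)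
  next
    case False
    let ?d = "hamming u' w'"
    have "card {x \<in> cube q (Suc n). hamming x u + hamming x w \<le> s}
        \<le> q * card {x \<in> cube q n. hamming x u' + hamming x w' \<le> s - 1}"
      using card_hamming_sum_Cons_diff[OF False] by (simp add: u w)
    also have "\<dots> \<le> q * (q ^ ?d * vol q (Suc n) ((s - 1 - ?d) div 2))"
      using order_trans[OF IH mult_le_mono2[OF vol_mono_length]] by (rule mult_le_mono2)
    finally show ?thesis
      using False by (simp add: u w hamming_Cons)
  qed
qed

lemma card_hamming_ball_Int_le:
  assumes "u \<in> cube q n" "w \<in> cube q n"
  shows "card (hamming_ball q n t u \<inter> hamming_ball q n t w)
           \<le> q ^ hamming u w * vol q n ((2 * t - hamming u w) div 2)"
proof -
  have "card (hamming_ball q n t u \<inter> hamming_ball q n t w)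
      \<le> card {x \<in> cube q n. hamming x u + hamming x w \<le> 2 * t}"
    by (intro card_mono) (auto simp: hamming_ball_def)
  also have "\<dots> \<le> q ^ hamming u w * vol q n ((2 * t - hamming u w) div 2)"
    by (rule card_hamming_sum_le[OF assms])
  finally show ?thesis .
qed

lemma hamming_ball_disjoint:
  assumes "u \<in> cube q n" "w \<in> cube q n" "2 * t < hamming u w"
  shows "hamming_ball q n t u \<inter> hamming_ball q n t w = {}"
proof -
  have False if "x \<in> hamming_ball q n t u" "x \<in> hamming_ball q n t w" for x
  proof -
    have x: "x \<in> cube q n" "hamming x u \<le> t" "hamming x w \<le> t"
      using that by (auto simp: hamming_ball_def)
    then show False
      using hamming_triangle_cube[OF assms(1) x(1) assms(2)] hamming_sym_cube[OF assms(1) x(1)] assms(3)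
      by linarith
  qed
  then show ?thesis by blast
qed

lemma card_hamming_ball_Int_le_near:
  assumes "u \<in> cube q n" "w \<in> cube q n" "u \<noteq> w" "hamming u w \<le> 2 * r" "0 < q"
  shows "card (hamming_ball q n t u \<inter> hamming_ball q n t w) \<le> q ^ (2 * r) * vol q n (t - 1)"
proof -
  have "hamming u w \<noteq> 0"
    using assms(1-3) by (simp add: hamming_eq_0_iff cube_length)
  then have "q ^ hamming u w \<le> q ^ (2 * r)" "(2 * t - hamming u w) div 2 \<le> t - 1"
    using assms(4,5) by (auto intro: power_increasing)
  then show ?thesis
    using card_hamming_ball_Int_le[OF assms(1,2), of t] mult_le_mono[OF _ vol_mono_radius]
    by (meson le_trans)
qed

lemma card_hamming_ball_Int_le_far:
  assumes "u \<in> cube q n" "w \<in> cube q n" "2 * t \<le> hamming u w + 2 * r" "0 < q"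
  shows "card (hamming_ball q n t u \<inter> hamming_ball q n t w) \<le> q ^ (2 * t) * vol q n r"
proof (cases "2 * t < hamming u w")
  case True
  then show ?thesis using hamming_ball_disjoint[OF assms(1,2)] by simp
next
  case False
  then have "q ^ hamming u w \<le> q ^ (2 * t)" "(2 * t - hamming u w) div 2 \<le> r"
    using assms(3,4) by (auto intro: power_increasing)
  then show ?thesis
    using card_hamming_ball_Int_le[OF assms(1,2), of t] mult_le_mono[OF _ vol_mono_radius]
    by (meson le_trans)
qed

section \<open>Packing the clusters of an independent set\<close>

lemma sum_card_le_card_UN_plus_card_Int:
  assumes "finite F" "\<And>i. i \<in> F \<Longrightarrow> finite (A i)"
  shows "(\<Sum>i\<in>F. card (A i)) \<le> card (\<Union>i\<in>F. A i) + (\<Sum>i\<in>F. \<Sum>j\<in>F - {i}. card (A i \<inter> A j))"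
  using assms
proof (induction F rule: finite_induct)
  case empty
  then show ?case by simp
next
  case (insert a F)
  let ?U = "\<Union>i\<in>F. A i"
  have "card (A a) + card ?U = card (A a \<union> ?U) + card (A a \<inter> ?U)"
    using insert by (intro card_Un_Int) auto
  moreover have "card (A a \<inter> ?U) \<le> (\<Sum>j\<in>F. card (A a \<inter> A j))"
    using card_UN_le[OF insert(1), of "\<lambda>j. A a \<inter> A j"] by (simp only: Int_UN_distrib)
  moreover have "(\<Sum>i\<in>F. \<Sum>j\<in>F - {i}. card (A i \<inter> A j))
      \<le> (\<Sum>i\<in>F. \<Sum>j\<in>insert a F - {i}. card (A i \<inter> A j))"
    using insert by (intro sum_mono sum_mono2) auto
  moreover have "(\<Sum>i\<in>insert a F. \<Sum>j\<in>insert a F - {i}. card (A i \<inter> A j)) =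
      (\<Sum>j\<in>F. card (A a \<inter> A j)) + (\<Sum>i\<in>F. \<Sum>j\<in>insert a F - {i}. card (A i \<inter> A j))"
    using insert by (simp add: insert_Diff_if)
  moreover have "(\<Sum>i\<in>insert a F. card (A i)) = card (A a) + (\<Sum>i\<in>F. card (A i))"
    using insert by simp
  moreover have "(\<Sum>i\<in>F. card (A i)) \<le> card ?U + (\<Sum>i\<in>F. \<Sum>j\<in>F - {i}. card (A i \<inter> A j))"
    using insert by simp
  moreover have "card (\<Union>i\<in>insert a F. A i) = card (A a \<union> ?U)"
    by simp
  ultimately show ?case
    by linarith
qed

lemma card_mul_vol_le_of_small_overlaps:
  assumes T: "T \<subseteq> cube q n"
    and overlaps: "\<And>u. u \<in> T \<Longrightarrow>
      2 * (\<Sum>u'\<in>T - {u}. card (hamming_ball q n t u \<inter> hamming_ball q n t u')) \<le> vol q n t"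
  shows "card T * vol q n t \<le> 2 * q ^ n"
proof -
  let ?O = "\<Sum>u\<in>T. \<Sum>u'\<in>T - {u}. card (hamming_ball q n t u \<inter> hamming_ball q n t u')"
  have fin: "finite T"
    using finite_subset[OF T] by simp
  have "card T * vol q n t = (\<Sum>u\<in>T. card (hamming_ball q n t u))"
    using T by (simp add: card_hamming_ball subset_iff)
  also have "\<dots> \<le> card (\<Union>u\<in>T. hamming_ball q n t u) + ?O"
    using fin by (intro sum_card_le_card_UN_plus_card_Int) auto
  also have "card (\<Union>u\<in>T. hamming_ball q n t u) \<le> card (cube q n)"
    using hamming_ball_subset_cube by (intro card_mono) (auto simp: UN_subset_iff)
  finally have "card T * vol q n t \<le> q ^ n + ?O"
    by (simp add: card_cube)
  moreover have "2 * ?O \<le> card T * vol q n t"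
    using sum_mono[OF overlaps, of T] by (simp add: sum_distrib_left)
  ultimately show ?thesis by linarith
qed

lemma card_adj_le_max_deg: "finite S \<Longrightarrow> v \<in> S \<Longrightarrow> card {u \<in> S. adjG t u v} \<le> max_deg t S"
  unfolding max_deg_def by (auto intro!: Max_ge)

lemma card_near_le_max_deg:
  assumes "S \<subseteq> cube q n" "x \<in> cube q n"
  shows "card {s \<in> S. hamming x s \<le> t} \<le> max_deg t S + 1"
proof (cases "{s \<in> S. hamming x s \<le> t} = {}")
  case True
  then show ?thesis
    by (metis card.empty zero_le)
next
  case False
  then obtain s0 where s0: "s0 \<in> S" "hamming x s0 \<le> t" by auto
  have fin: "finite S"
    using finite_subset[OF assms(1)] by simp
  have "{s \<in> S. hamming x s \<le> t} \<subseteq> insert s0 {u \<in> S. adjG t u s0}"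
  proof
    fix u assume u: "u \<in> {s \<in> S. hamming x s \<le> t}"
    then have "u \<in> cube q n" "s0 \<in> cube q n"
      using s0 assms by auto
    then have "hamming u s0 \<le> 2 * t"
      using hamming_triangle_cube[of u q n x s0] hamming_sym_cube[of u q n x] u s0 assms(2) by auto
    then show "u \<in> insert s0 {u \<in> S. adjG t u s0}"
      using u by (auto simp: adjG_def)
  qed
  then have "card {s \<in> S. hamming x s \<le> t} \<le> card (insert s0 {u \<in> S. adjG t u s0})"
    using fin by (intro card_mono) auto
  also have "\<dots> \<le> Suc (card {u \<in> S. adjG t u s0})"
    by (rule card_insert_le_m1) auto
  finally have "card {s \<in> S. hamming x s \<le> t} \<le> Suc (card {u \<in> S. adjG t u s0})" .
  then show ?thesis
    using card_adj_le_max_deg[OF fin s0(1), of t] by linarith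
qed

text \<open>Double counting the pairs \<open>(x, s)\<close> with \<open>s \<in> S\<close> and \<open>hamming x s \<le> t\<close>.\<close>
lemma card_mul_vol_le_max_deg:
  assumes "S \<subseteq> cube q n"
  shows "card S * vol q n t \<le> q ^ n * (max_deg t S + 1)"
proof -
  have fin: "finite S"
    using finite_subset[OF assms] by simp
  have "card S * vol q n t = (\<Sum>s\<in>S. card {x \<in> cube q n. hamming x s \<le> t})"
    using assms card_hamming_ball by (simp add: hamming_ball_def subset_iff)
  also have "\<dots> = (\<Sum>s\<in>S. \<Sum>x\<in>cube q n. of_bool (hamming x s \<le> t))"
    by (simp add: Int_def)
  also have "\<dots> = (\<Sum>x\<in>cube q n. \<Sum>s\<in>S. of_bool (hamming x s \<le> t))"
    by (rule sum.swap)
  also have "\<dots> = (\<Sum>x\<in>cube q n. card {s \<in> S. hamming x s \<le> t})"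
    using fin by (simp add: Int_def)
  also have "\<dots> \<le> (\<Sum>x\<in>cube q n. max_deg t S + 1)"
    using assms by (intro sum_mono card_near_le_max_deg) auto
  finally show ?thesis by (simp add: card_cube)
qed

lemma sum_card_hamming_ball_Int_le_near:
  assumes "0 < q" "C \<subseteq> cube q n" "v \<in> cube q n" "\<And>u. u \<in> C \<Longrightarrow> hamming u v \<le> r" "u \<in> C"
  shows "(\<Sum>u'\<in>C - {u}. card (hamming_ball q n t u \<inter> hamming_ball q n t u'))
           \<le> card C * (q ^ (2 * r) * vol q n (t - 1))"
proof -
  have "card (hamming_ball q n t u \<inter> hamming_ball q n t u') \<le> q ^ (2 * r) * vol q n (t - 1)"
    if "u' \<in> C - {u}" for u'
  proof (rule card_hamming_ball_Int_le_near)
    have "u \<in> cube q n" "u' \<in> cube q n" "hamming u v \<le> r" "hamming u' v \<le> r"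
      using assms that by auto
    then show "hamming u u' \<le> 2 * r"
      using hamming_triangle_cube[of u q n v u'] hamming_sym_cube[of v q n u'] assms(3)
      by linarith
  qed (use assms that in auto)
  then have "(\<Sum>u'\<in>C - {u}. card (hamming_ball q n t u \<inter> hamming_ball q n t u'))
      \<le> (\<Sum>u'\<in>C - {u}. q ^ (2 * r) * vol q n (t - 1))"
    by (rule sum_mono)
  also have "\<dots> = card (C - {u}) * (q ^ (2 * r) * vol q n (t - 1))"
    by simp
  also have "\<dots> \<le> card C * (q ^ (2 * r) * vol q n (t - 1))"
    by (intro mult_le_mono1 card_Diff1_le)
  finally show ?thesis .
qed

lemma sum_card_hamming_ball_Int_le_far:
  assumes "0 < q" "S \<subseteq> cube q n" "u \<in> S" "F \<subseteq> S - {u}"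
    and far: "\<And>u'. u' \<in> F \<Longrightarrow> 2 * t \<le> hamming u u' + 2 * r"
  shows "(\<Sum>u'\<in>F. card (hamming_ball q n t u \<inter> hamming_ball q n t u'))
           \<le> max_deg t S * (q ^ (2 * t) * vol q n r)"
proof -
  let ?N = "{u' \<in> S. adjG t u' u}"
  let ?ov = "\<lambda>u'. card (hamming_ball q n t u \<inter> hamming_ball q n t u')"
  have fin: "finite S"
    using finite_subset[OF assms(2)] by simp
  have cube: "u \<in> cube q n" "F \<subseteq> cube q n"
    using assms(2-4) by auto
  have "?ov u' = 0" if "u' \<in> F - ?N" for u'
  proof -
    have u': "u' \<in> S" "u' \<noteq> u" "u' \<in> cube q n"
      using that assms(4) cube by auto
    then have "2 * t < hamming u u'"
      using that hamming_sym_cube[OF cube(1) u'(3)] by (auto simp: adjG_def)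
    then show ?thesis
      using hamming_ball_disjoint[OF cube(1) u'(3)] by simp
  qed
  then have "(\<Sum>u'\<in>F. ?ov u') = (\<Sum>u'\<in>F \<inter> ?N. ?ov u')"
    using finite_subset[OF _ fin] assms(4) by (intro sum.mono_neutral_right) auto
  also have "\<dots> \<le> (\<Sum>u'\<in>F \<inter> ?N. q ^ (2 * t) * vol q n r)"
    using card_hamming_ball_Int_le_far[OF cube(1) _ far assms(1)] cube(2)
    by (intro sum_mono) auto
  also have "\<dots> = card (F \<inter> ?N) * (q ^ (2 * t) * vol q n r)"
    by simp
  also have "card (F \<inter> ?N) \<le> card ?N"
    using fin by (intro card_mono) auto
  finally show ?thesis
    using card_adj_le_max_deg[OF fin assms(3), of t] order_trans mult_le_mono1 by blast
qed

lemma sum_card_hamming_ball_Int_clusters_le: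
  fixes B :: "nat list \<Rightarrow> nat list set"
  assumes q: "0 < q" and S: "S \<subseteq> cube q n" and I: "I \<subseteq> S"
    and sep: "\<And>v w. v \<in> I \<Longrightarrow> w \<in> I \<Longrightarrow> v \<noteq> w \<Longrightarrow> 2 * t < hamming v w"
    and B: "\<And>v. v \<in> I \<Longrightarrow> B v \<subseteq> {u \<in> S. hamming u v \<le> r}"
    and card_B: "\<And>v. v \<in> I \<Longrightarrow> card (B v) = m"
    and v: "v \<in> I" and u: "u \<in> B v"
  shows "(\<Sum>u'\<in>(\<Union>w\<in>I. B w) - {u}. card (hamming_ball q n t u \<inter> hamming_ball q n t u'))
           \<le> m * (q ^ (2 * r) * vol q n (t - 1)) + max_deg t S * (q ^ (2 * t) * vol q n r)"
proof -
  let ?T = "\<Union>w\<in>I. B w"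
  let ?ov = "\<lambda>u'. card (hamming_ball q n t u \<inter> hamming_ball q n t u')"
  have TS: "?T \<subseteq> S"
    using B by blast
  have fin: "finite ?T"
    using finite_subset[OF TS finite_subset[OF S finite_cube]] .
  have split: "?T - {u} = (B v - {u}) \<union> (?T - B v)"
    using u v by auto
  have "(\<Sum>u'\<in>?T - {u}. ?ov u') = (\<Sum>u'\<in>B v - {u}. ?ov u') + (\<Sum>u'\<in>?T - B v. ?ov u')"
    unfolding split using finite_subset[OF _ fin] v by (intro sum.union_disjoint) auto
  also have "(\<Sum>u'\<in>B v - {u}. ?ov u') \<le> m * (q ^ (2 * r) * vol q n (t - 1))"
  proof -
    have "B v \<subseteq> cube q n" "v \<in> cube q n" "\<And>u'. u' \<in> B v \<Longrightarrow> hamming u' v \<le> r"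
      using B[OF v] v I S by auto
    from sum_card_hamming_ball_Int_le_near[OF q this u] show ?thesis
      unfolding card_B[OF v] .
  qed
  also have "(\<Sum>u'\<in>?T - B v. ?ov u') \<le> max_deg t S * (q ^ (2 * t) * vol q n r)"
  proof (rule sum_card_hamming_ball_Int_le_far[OF q S])
    show "u \<in> S" "?T - B v \<subseteq> S - {u}"
      using u v B by blast+
    fix u' assume "u' \<in> ?T - B v"
    then obtain w where w: "w \<in> I" "w \<noteq> v" "u' \<in> B w"
      by blast
    have "u \<in> cube q n" "u' \<in> cube q n" "v \<in> cube q n" "w \<in> cube q n"
        "hamming u v \<le> r" "hamming u' w \<le> r"
      using B[OF v] B[OF w(1)] u v w I S by auto
    then have "hamming v w \<le> hamming u u' + 2 * r"
      by (rule hamming_centres_le)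
    then show "2 * t \<le> hamming u u' + 2 * r"
      using sep[OF v w(1)] w(2) by fastforce
  qed
  finally show ?thesis
    by simp
qed

lemma obtain_subsets_with_card:
  assumes "\<forall>i\<in>I. m \<le> card (A i)"
  obtains B where "\<forall>i\<in>I. B i \<subseteq> A i \<and> card (B i) = m"
proof -
  have "\<exists>C. C \<subseteq> A i \<and> card C = m" if "i \<in> I" for i
    using obtain_subset_with_card_n[of m "A i"] assms that by blast
  then have "\<forall>i\<in>I. \<exists>C. C \<subseteq> A i \<and> card C = m"
    by blast
  from bchoice[OF this] show ?thesis
    using that by blast
qed

text \<open>Each \<open>v \<in> I\<close> gets a cluster of \<open>m\<close> points of \<open>S\<close> within distance \<open>r\<close>. The clusters are
  disjoint since \<open>r \<le> t\<close>, and \<open>near\<close> and \<open>far\<close> bound the overlaps of the radius-\<open>t\<close> balls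
  within one cluster and across clusters.\<close>
lemma card_indep_mul_vol_le:
  assumes q: "0 < q" and S: "S \<subseteq> cube q n" and "r \<le> t" and I: "I \<in> indep_sets t S"
    and many: "\<And>v. v \<in> I \<Longrightarrow> m \<le> card {u \<in> S. hamming u v \<le> r}"
    and near: "4 * m * q ^ (2 * r) * vol q n (t - 1) \<le> vol q n t"
    and far: "4 * max_deg t S * q ^ (2 * t) * vol q n r \<le> vol q n t"
  shows "card I * m * vol q n t \<le> 2 * q ^ n"
proof -
  have IS: "I \<subseteq> S" and sep: "\<And>v w. v \<in> I \<Longrightarrow> w \<in> I \<Longrightarrow> v \<noteq> w \<Longrightarrow> 2 * t < hamming v w"
    using I by (auto simp: indep_sets_def adjG_def not_le)
  have fin: "finite S"
    using finite_subset[OF S] by simp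
  obtain B where "\<forall>v\<in>I. B v \<subseteq> {u \<in> S. hamming u v \<le> r} \<and> card (B v) = m"
    using obtain_subsets_with_card[of I m "\<lambda>v. {u \<in> S. hamming u v \<le> r}"] many by blast
  then have B: "\<And>v. v \<in> I \<Longrightarrow> B v \<subseteq> {u \<in> S. hamming u v \<le> r}"
    and card_B: "\<And>v. v \<in> I \<Longrightarrow> card (B v) = m"
    by auto
  have finite_B: "finite (B v)" if "v \<in> I" for v
    using B[OF that] finite_subset[OF _ fin] by blast
  have disjoint: "B v \<inter> B w = {}" if "v \<in> I" "w \<in> I" "v \<noteq> w" for v w
  proof -
    have "hamming v w \<le> 2 * r" if "u \<in> B v" "u \<in> B w" for u
    proof -
      have "u \<in> cube q n" "v \<in> cube q n" "w \<in> cube q n" "hamming u v \<le> r" "hamming u w \<le> r"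
        using B \<open>v \<in> I\<close> \<open>w \<in> I\<close> that IS S by auto
      from hamming_centres_le[OF this(1,1,2,3,4,5)] show ?thesis
        by simp
    qed
    then show ?thesis
      using sep[OF that] \<open>r \<le> t\<close> by (meson disjoint_iff le_trans mult_le_mono2 not_le)
  qed
  have "card (\<Union>v\<in>I. B v) = card I * m"
    using finite_subset[OF IS fin] finite_B disjoint card_B
    by (subst card_UN_disjoint) auto
  moreover have "card (\<Union>v\<in>I. B v) * vol q n t \<le> 2 * q ^ n"
  proof (rule card_mul_vol_le_of_small_overlaps)
    show "(\<Union>v\<in>I. B v) \<subseteq> cube q n"
      using B S by blast
    fix u assume "u \<in> (\<Union>v\<in>I. B v)"
    then obtain v where "v \<in> I" "u \<in> B v"
      by blast
    from sum_card_hamming_ball_Int_clusters_le[OF q S IS sep B card_B this]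
    show "2 * (\<Sum>u'\<in>(\<Union>v\<in>I. B v) - {u}. card (hamming_ball q n t u \<inter> hamming_ball q n t u'))
        \<le> vol q n t"
      using near far by (simp add: algebra_simps)
  qed
  ultimately show ?thesis
    by simp
qed

section \<open>Counting families of small sets\<close>

lemma sum_power_card_Pow:
  fixes x :: "'a :: comm_semiring_1"
  assumes "finite A"
  shows "(\<Sum>I\<in>Pow A. x ^ card I) = (1 + x) ^ card A"
  using assms
proof (induction A rule: finite_induct)
  case empty
  then show ?case by simp
next
  case (insert a A)
  have "inj_on (insert a) (Pow A)"
    by (intro inj_onI) (metis Diff_insert_absorb PowD insert.hyps(2) subsetD)
  moreover have "x ^ card (insert a I) = x * x ^ card I" if "I \<in> Pow A" for I
  proof -
    have "finite I" "a \<notin> I"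
      using that finite_subset[OF _ insert.hyps(1)] insert.hyps(2) by auto
    then show ?thesis by simp
  qed
  ultimately have "(\<Sum>I\<in>insert a ` Pow A. x ^ card I) = x * (\<Sum>I\<in>Pow A. x ^ card I)"
    by (simp add: sum.reindex sum_distrib_left)
  moreover have "Pow A \<inter> insert a ` Pow A = {}"
    using insert.hyps(2) by auto
  ultimately show ?case
    using insert by (simp add: Pow_insert sum.union_disjoint algebra_simps)
qed

lemma card_le_of_card_members_le:
  fixes y K :: real
  assumes A: "finite A" and F: "F \<subseteq> Pow A" and K: "\<And>I. I \<in> F \<Longrightarrow> real (card I) \<le> K"
    and y: "1 \<le> y"
  shows "real (card F) \<le> exp (real (card A) / y + K * ln y)"
proof -
  define x where "x = inverse y"
  have x: "0 < x" "x \<le> 1"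
    using y by (auto simp: x_def inverse_le_1_iff)
  have "1 \<le> x ^ card I / x powr K" if "I \<in> F" for I
  proof -
    have "x powr K \<le> x ^ card I"
      using powr_mono'[OF K[OF that], of x] x by (simp add: powr_realpow)
    then show ?thesis
      using x by simp
  qed
  then have "(\<Sum>I\<in>F. 1) \<le> (\<Sum>I\<in>F. x ^ card I / x powr K)"
    by (rule sum_mono)
  then have "real (card F) \<le> (\<Sum>I\<in>F. x ^ card I / x powr K)"
    by simp
  also have "\<dots> \<le> (\<Sum>I\<in>Pow A. x ^ card I) / x powr K"
    unfolding sum_divide_distrib[symmetric] using A F x by (intro divide_right_mono sum_mono2) auto
  also have "\<dots> \<le> exp x ^ card A / x powr K"
    unfolding sum_power_card_Pow[OF A] using x by (intro divide_right_mono power_mono) auto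
  also have "\<dots> = exp (real (card A) / y + K * ln y)"
  proof -
    have "exp x ^ card A = exp (real (card A) / y)"
      by (simp add: x_def divide_inverse flip: exp_of_nat_mult)
    moreover have "x powr K = exp (- (K * ln y))"
      using y by (simp add: x_def powr_def ln_inverse)
    ultimately show ?thesis
      by (simp add: exp_add exp_minus divide_inverse)
  qed
  finally show ?thesis .
qed

lemma exp_le_two_powr: "0 \<le> y \<Longrightarrow> exp y \<le> 2 powr (2 * y :: real)"
proof -
  assume "0 \<le> y"
  have "1 / 2 \<le> ln (2 :: real)"
    using exp_half_le2 ln_le_cancel_iff[of "exp (1/2)" 2] by simp
  then have "y \<le> ln 2 * (2 * y)"
    using mult_right_mono[of "1/2" "ln 2" "2 * y"] \<open>0 \<le> y\<close> by simp
  then show ?thesis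
    by (simp add: powr_def mult.commute)
qed

section \<open>The parameter regime of the theorem\<close>

lemma ratio_power_ge:
  assumes "0 < q" "60 \<le> t" "real t \<le> 10 * sqrt (real n)" "10 * real q ^ 2 \<le> sqrt (real n)"
  shows "real n ^ 30 / (10 * real q ^ 2) ^ 60 \<le> (real n / (real t * real q ^ 2)) ^ t"
proof -
  define B where "B = sqrt (real n) / (10 * real q ^ 2)"
  have B1: "1 \<le> B"
    using assms(1,4) by (simp add: B_def)
  have "sqrt (real n) * real t \<le> sqrt (real n) * (10 * sqrt (real n))"
    using assms(3) by (intro mult_left_mono) auto
  also have "\<dots> = 10 * (sqrt (real n) * sqrt (real n))"
    by (simp only: mult_ac)
  finally have "sqrt (real n) * real t \<le> 10 * real n"
    by simp
  then have "B \<le> real n / (real t * real q ^ 2)"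
    using assms(1,2) by (simp add: B_def field_simps)
  have "sqrt (real n) ^ 60 = real n ^ 30"
    using power_mult[of "sqrt (real n)" 2 30] by simp
  then have "real n ^ 30 / (10 * real q ^ 2) ^ 60 = B ^ 60"
    by (simp add: B_def power_divide)
  also have "\<dots> \<le> B ^ t"
    using B1 assms(2) by (intro power_increasing) auto
  also have "\<dots> \<le> (real n / (real t * real q ^ 2)) ^ t"
    using B1 \<open>B \<le> _\<close> by (intro power_mono) auto
  finally show ?thesis .
qed

lemma power_mul_le_vol:
  assumes q: "2 \<le> q" and t: "60 \<le> t" "real t \<le> 10 * sqrt (real n)"
    and n: "10 * real q ^ 2 \<le> sqrt (real n)" "84 * real q ^ 20 * (10 * real q ^ 2) ^ 60 \<le> real n ^ 5"
  shows "84 * real q ^ 20 * real n ^ 25 * real q ^ (2 * t) \<le> real (vol q n t)"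
proof -
  have "10 \<le> sqrt (real n)"
    using n(1) q power_mono[of 2 "real q" 2] by simp
  then have "10 * sqrt (real n) \<le> sqrt (real n) * sqrt (real n)"
    by (intro mult_right_mono) auto
  then have tn: "t \<le> n"
    using t(2) by simp
  have "84 * real q ^ 20 * (10 * real q ^ 2) ^ 60 * real n ^ 25 \<le> real n ^ 5 * real n ^ 25"
    using n(2) by (intro mult_right_mono) auto
  then have "84 * real q ^ 20 * real n ^ 25 \<le> real n ^ 30 / (10 * real q ^ 2) ^ 60"
    using q by (simp add: field_simps flip: power_add)
  then have "84 * real q ^ 20 * real n ^ 25 * real q ^ (2 * t)
      \<le> (real n ^ 30 / (10 * real q ^ 2) ^ 60) * real q ^ (2 * t)"
    by (intro mult_right_mono) auto
  also have "\<dots> \<le> (real n / (real t * real q ^ 2)) ^ t * (real q ^ 2) ^ t"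
    unfolding power_mult using ratio_power_ge[of q t n] q t n by (intro mult_right_mono) auto
  also have "\<dots> = (real n / real t) ^ t"
    using q by (simp flip: power_mult_distrib)
  also have "\<dots> \<le> real (vol q n t)"
    using power_div_le_vol[OF q tn] .
  finally show ?thesis .
qed

lemma max_deg_overlap_le_vol:
  assumes q: "2 \<le> q" and t: "60 \<le> t" "real t \<le> 10 * sqrt (real n)"
    and n: "10 * real q ^ 2 \<le> sqrt (real n)" "84 * real q ^ 20 * (10 * real q ^ 2) ^ 60 \<le> real n ^ 5"
    and D: "D \<le> n ^ 5"
  shows "4 * D * q ^ (2 * t) * vol q n 20 \<le> vol q n t"
proof -
  have "1 \<le> n * q"
    using n(1) q by (cases "n = 0") auto
  then have "vol q n 20 \<le> 21 * (n * q) ^ 20"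
    using vol_le_power[of n q 20] by simp
  then have "real (vol q n 20) \<le> real (21 * (n * q) ^ 20)"
    by (simp only: of_nat_le_iff)
  moreover have "real D \<le> real (n ^ 5)"
    using D by (simp only: of_nat_le_iff)
  ultimately have "4 * real D * real q ^ (2 * t) * real (vol q n 20)
      \<le> 4 * real n ^ 5 * real q ^ (2 * t) * (21 * (real n * real q) ^ 20)"
    by (intro mult_mono) auto
  also have "\<dots> = 84 * real q ^ 20 * real n ^ 25 * real q ^ (2 * t)"
    by (simp add: power_mult_distrib algebra_simps)
  also have "\<dots> \<le> real (vol q n t)"
    by (rule power_mul_le_vol[OF q t n])
  finally have "real (4 * D * q ^ (2 * t) * vol q n 20) \<le> real (vol q n t)"
    by simp
  then show ?thesis
    by (simp only: of_nat_le_iff)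
qed

lemma sum_degk_eq_card:
  assumes "finite S"
  shows "(\<Sum>k=1..r. degk S k v) = card {u \<in> S. 1 \<le> hamming u v \<and> hamming u v \<le> r}"
proof -
  have "{u \<in> S. 1 \<le> hamming u v \<and> hamming u v \<le> r} = (\<Union>k\<in>{1..r}. {u \<in> S. hamming u v = k})"
    by auto
  also have "card \<dots> = (\<Sum>k=1..r. degk S k v)"
    unfolding degk_def using assms by (intro card_UN_disjoint) auto
  finally show ?thesis ..
qed

lemma card_le_hbound:
  assumes "S \<subseteq> cube q n" "max_deg t S \<le> n ^ 5" "1 \<le> n"
  shows "real (card S) \<le> 2 * real n ^ 5 * hbound q n t"
proof -
  have "max_deg t S + 1 \<le> 2 * n ^ 5"
    using assms(2) one_le_power[OF assms(3), of 5] by linarith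
  then have "card S * vol q n t \<le> q ^ n * (2 * n ^ 5)"
    using card_mul_vol_le_max_deg[OF assms(1), of t] mult_le_mono2 order_trans by blast
  then have "real (card S * vol q n t) \<le> real (q ^ n * (2 * n ^ 5))"
    by (simp only: of_nat_le_iff)
  then have "real (card S) * real (vol q n t) \<le> real (q ^ n) * (2 * real n ^ 5)"
    by simp
  then show ?thesis
    using vol_ge_1[of q n t] by (simp add: hbound_def field_simps)
qed

lemma card_indep_le_hbound:
  fixes L :: real
  assumes q: "2 \<le> q" and S: "S \<subseteq> cube q n" and I: "I \<in> indep_sets t S"
    and t: "60 \<le> t" "real t \<le> 10 * sqrt (real n)" and D: "max_deg t S \<le> n ^ 5"
    and L: "0 < L" "\<And>v. v \<in> I \<Longrightarrow> L \<le> (\<Sum>k=1..20. real (degk S k v))"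
    and n: "40 * real q ^ 40 * (L + 1) * sqrt (real n) + 10 * sqrt (real n) \<le> real n"
      "10 * real q ^ 2 \<le> sqrt (real n)" "84 * real q ^ 20 * (10 * real q ^ 2) ^ 60 \<le> real n ^ 5"
  shows "real (card I) * L \<le> 2 * hbound q n t"
proof -
  define m where "m = nat \<lceil>L\<rceil>"
  have m: "L \<le> real m" "real m \<le> L + 1"
    unfolding m_def using L(1) by (auto simp: of_nat_nat)
  have fin: "finite S"
    using finite_subset[OF S] by simp
  have many: "m \<le> card {u \<in> S. hamming u v \<le> 20}" if "v \<in> I" for v
  proof -
    have "L \<le> real (card {u \<in> S. 1 \<le> hamming u v \<and> hamming u v \<le> 20})"
      using L(2)[OF that] sum_degk_eq_card[OF fin, where r = 20 and v = v] by (simp flip: of_nat_sum)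
    also have "\<dots> \<le> real (card {u \<in> S. hamming u v \<le> 20})"
      using fin by (intro of_nat_mono card_mono) auto
    finally show ?thesis
      unfolding m_def by (simp add: nat_le_iff ceiling_le_iff)
  qed
  have "real m * real t \<le> (L + 1) * (10 * sqrt (real n))"
    using m t(2) L(1) by (intro mult_mono) auto
  then have "4 * real q ^ 40 * (real m * real t) \<le> 4 * real q ^ 40 * ((L + 1) * (10 * sqrt (real n)))"
    by (intro mult_left_mono) auto
  then have "real (4 * m * q ^ 40 * t + t) \<le> real n"
    using n(1) t(2) by (simp add: algebra_simps)
  then have near: "4 * m * q ^ (2 * 20) * vol q n (t - 1) \<le> vol q n t"
    using vol_pred_le[OF q, of t "4 * m * q ^ 40" n] t(1) by (simp only: of_nat_le_iff) simp
  have "card I * m * vol q n t \<le> 2 * q ^ n"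
    using card_indep_mul_vol_le[OF _ S _ I many near max_deg_overlap_le_vol[OF q t n(2,3) D]] q t(1)
    by simp
  then have "real (card I * m * vol q n t) \<le> real (2 * q ^ n)"
    by (simp only: of_nat_le_iff)
  then have "real (card I) * real m \<le> 2 * hbound q n t"
    using vol_ge_1[of q n t] by (simp add: hbound_def field_simps)
  moreover have "real (card I) * L \<le> real (card I) * real m"
    using m(1) by (intro mult_left_mono) auto
  ultimately show ?thesis
    by linarith
qed

lemma card_indep_high_degree_le:
  fixes \<epsilon> :: real
  assumes q: "2 \<le> q" and \<epsilon>: "0 < \<epsilon>"
    and n: "3 \<le> real n"
      "40 * real q ^ 40 * (ln (real n) / \<epsilon> + 1) * sqrt (real n) + 10 * sqrt (real n) \<le> real n"
      "10 * real q ^ 2 \<le> sqrt (real n)" "84 * real q ^ 20 * (10 * real q ^ 2) ^ 60 \<le> real n ^ 5"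
    and t: "60 \<le> t" "real t \<le> 10 * sqrt (real n)" and S: "S \<subseteq> cube q n" and D: "max_deg t S \<le> n ^ 5"
    and I: "I \<in> indep_sets t {v \<in> S. (\<Sum>k=1..20. real (degk S k v)) \<ge> ln (real n) / \<epsilon>}"
  shows "real (card I) \<le> 2 * \<epsilon> * hbound q n t / ln (real n)"
proof -
  have ln: "0 < ln (real n)"
    using n(1) by simp
  have "I \<in> indep_sets t S" "\<And>v. v \<in> I \<Longrightarrow> ln (real n) / \<epsilon> \<le> (\<Sum>k=1..20. real (degk S k v))"
    using I by (auto simp: indep_sets_def)
  from card_indep_le_hbound[OF q S this(1) t D _ this(2)] ln \<epsilon> n(2-4)
  have "real (card I) * (ln (real n) / \<epsilon>) \<le> 2 * hbound q n t"
    by simp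
  then show ?thesis
    using ln \<epsilon> by (simp add: field_simps)
qed

lemma num_indep_high_degree_le:
  fixes \<epsilon> :: real
  assumes q: "2 \<le> q" and \<epsilon>: "0 < \<epsilon>"
    and n: "3 \<le> real n"
      "40 * real q ^ 40 * (ln (real n) / \<epsilon> + 1) * sqrt (real n) + 10 * sqrt (real n) \<le> real n"
      "10 * real q ^ 2 \<le> sqrt (real n)" "84 * real q ^ 20 * (10 * real q ^ 2) ^ 60 \<le> real n ^ 5"
      "2 / real n \<le> \<epsilon>"
    and t: "60 \<le> t" "real t \<le> 10 * sqrt (real n)" and S: "S \<subseteq> cube q n" and D: "max_deg t S \<le> n ^ 5"
  shows "real (num_indep t {v \<in> S. (\<Sum>k=1..20. real (degk S k v)) \<ge> ln (real n) / \<epsilon>})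
           \<le> 2 powr (26 * \<epsilon> * hbound q n t)"
proof -
  define S2 where "S2 = {v \<in> S. (\<Sum>k=1..20. real (degk S k v)) \<ge> ln (real n) / \<epsilon>}"
  define H where "H = hbound q n t"
  have fin: "finite S"
    using finite_subset[OF S] by simp
  have n1: "1 \<le> n"
    using n(1) by simp
  have H: "0 \<le> H"
    by (simp add: H_def hbound_def)
  have "real (num_indep t S2) \<le> exp (real (card S2) / real n ^ 6 + 2 * \<epsilon> * H / ln (real n) * ln (real n ^ 6))"
    unfolding num_indep_def using fin n(1) card_indep_high_degree_le[OF q \<epsilon> n(1-4) t S D]
    by (intro card_le_of_card_members_le) (auto simp: S2_def H_def indep_sets_def)
  also have "\<dots> \<le> exp (13 * \<epsilon> * H)"
  proof -
    have "real (card S2) \<le> real (card S)"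
      using fin by (intro of_nat_mono card_mono) (auto simp: S2_def)
    then have "real (card S2) \<le> 2 * real n ^ 5 * H"
      using card_le_hbound[OF S D n1] unfolding H_def by linarith
    then have "real (card S2) / real n ^ 6 \<le> 2 / real n * H"
      using n(1) by (simp add: field_simps eval_nat_numeral)
    also have "\<dots> \<le> \<epsilon> * H"
      using n(5) H by (intro mult_right_mono)
    moreover have "2 * \<epsilon> * H / ln (real n) * ln (real n ^ 6) = 12 * \<epsilon> * H"
      using n(1) by (simp add: ln_realpow field_simps)
    ultimately have "real (card S2) / real n ^ 6 + 2 * \<epsilon> * H / ln (real n) * ln (real n ^ 6)
        \<le> 13 * \<epsilon> * H"
      by linarith
    then show ?thesis
      by simp
  qed
  also have "\<dots> \<le> 2 powr (26 * \<epsilon> * H)"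
    using exp_le_two_powr[of "13 * \<epsilon> * H"] \<epsilon> H by (simp add: mult.assoc)
  finally show ?thesis
    unfolding S2_def H_def .
qed

lemma eventually_size_conditions:
  fixes \<epsilon> :: real
  assumes "0 < \<epsilon>"
  shows "eventually (\<lambda>n. 3 \<le> real n \<and>
      40 * real q ^ 40 * (ln (real n) / \<epsilon> + 1) * sqrt (real n) + 10 * sqrt (real n) \<le> real n \<and>
      10 * real q ^ 2 \<le> sqrt (real n) \<and>
      84 * real q ^ 20 * (10 * real q ^ 2) ^ 60 \<le> real n ^ 5 \<and>
      2 / real n \<le> \<epsilon>) sequentially"
proof -
  have "eventually (\<lambda>n. 3 \<le> real n) sequentially"
    by real_asymp
  moreover have "eventually (\<lambda>n. 40 * real q ^ 40 * (ln (real n) / \<epsilon> + 1) * sqrt (real n)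
      + 10 * sqrt (real n) \<le> real n) sequentially"
    using assms by real_asymp
  moreover have "eventually (\<lambda>n. 10 * real q ^ 2 \<le> sqrt (real n)) sequentially"
    by real_asymp
  moreover have "eventually (\<lambda>n. 84 * real q ^ 20 * (10 * real q ^ 2) ^ 60 \<le> real n ^ 5) sequentially"
    by real_asymp
  moreover have "eventually (\<lambda>n. 2 / real n \<le> \<epsilon>) sequentially"
    using assms by real_asymp
  ultimately show ?thesis
    by eventually_elim blast
qed

theorem lemma4p4:
  fixes q :: nat
  assumes "q \<ge> 2"
  shows "\<exists>C>0::real. \<forall>\<epsilon>>0::real. \<exists>n0::nat. \<forall>n t S.
           n \<ge> n0 \<longrightarrow> 60 \<le> t \<longrightarrow> real t \<le> 10 * sqrt (real n) \<longrightarrow>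
           S \<subseteq> cube q n \<longrightarrow> max_deg t S \<le> n ^ 5 \<longrightarrow>
           real (num_indep t {v \<in> S. (\<Sum>k=1..20. real (degk S k v)) \<ge> ln (real n) / \<epsilon>})
             \<le> 2 powr (C * \<epsilon> * hbound q n t)"
proof (intro exI[of _ "26::real"] conjI allI impI)
  fix \<epsilon> :: real
  assume "0 < \<epsilon>"
  with eventually_size_conditions[of \<epsilon> q] num_indep_high_degree_le[OF assms]
  show "\<exists>n0::nat. \<forall>n t S.
           n \<ge> n0 \<longrightarrow> 60 \<le> t \<longrightarrow> real t \<le> 10 * sqrt (real n) \<longrightarrow>
           S \<subseteq> cube q n \<longrightarrow> max_deg t S \<le> n ^ 5 \<longrightarrow>
           real (num_indep t {v \<in> S. (\<Sum>k=1..20. real (degk S k v)) \<ge> ln (real n) / \<epsilon>})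
             \<le> 2 powr (26 * \<epsilon> * hbound q n t)"
    unfolding eventually_sequentially by blast
qed simp

end
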